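(* Let $q$ be a prime power and $\mathcal{C}_2 \subsetneqq \mathcal{C}_1 \subseteq \mathbb{F}_q^{m \times n}$ be $\mathbb{F}_q$-linear codes, $\ell = \dim \mathcal{C}_1 - \dim \mathcal{C}_2$. Fix a subspace $\mathcal{W}$ with $\mathcal{C}_1 = \mathcal{C}_2 \oplus \mathcal{W}$ and an isomorphism $\psi : \mathbb{F}_q^\ell \to \mathcal{W}$; let $\mathbf{x}$ be uniform on $\mathbb{F}_q^\ell$ and $C = \psi(\mathbf{x}) + D$ with $D$ uniform on $\mathcal{C}_2$ independent of $\mathbf{x}$. Let $B \in \mathbb{F}_q^{\mu \times n}$ and $\mathcal{L} = {\rm Row}(B)$. Then, with mutual information computed with logarithms to base $q$, $$I(\mathbf{x}; CB^T) = \dim(\mathcal{C}_2^\perp \cap \mathcal{V}_\mathcal{L}) - \dim(\mathcal{C}_1^\perp \cap \mathcal{V}_\mathcal{L}).$$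
   Context: ${\rm Row}(B)$ is the row space of $B$. For a subspace $\mathcal{L} \subseteq \mathbb{F}_q^n$, $\mathcal{V}_\mathcal{L} = \{V \in \mathbb{F}_q^{m\times n} \mid {\rm Row}(V) \subseteq \mathcal{L}\}$. The dual of a linear code $\mathcal{C} \subseteq \mathbb{F}_q^{m \times n}$ is $\mathcal{C}^\perp = \{D \in \mathbb{F}_q^{m\times n} \mid {\rm Trace}(CD^T) = 0 \ \forall C \in \mathcal{C}\}$. *)

theory Defs
  imports "HOL-Analysis.Analysis" "HOL-Probability.Probability"
begin

text \<open>Matrices over a field: m x n matrices are elements of 'a^'n^'m.
  Scalar multiplication on matrices, making 'a^'n^'m an 'a-vector space.\<close>

definition mscale :: "'a::field \<Rightarrow> 'a^'n^'m \<Rightarrow> 'a^'n^'m" where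
  "mscale c A = (\<chi> i j. c * A $ i $ j)"

lemma mscale_vector_space: "vector_space (mscale :: 'a::field \<Rightarrow> 'a^'n^'m \<Rightarrow> 'a^'n^'m)"
  by unfold_locales (auto simp: mscale_def vec_eq_iff algebra_simps)

definition row_space :: "'a::field^'n^'m \<Rightarrow> ('a^'n) set" where
  "row_space B = vec.span (rows B)"

definition V_of :: "('a::field^'n) set \<Rightarrow> ('a^'n^'m) set" where
  "V_of L = {V. row_space V \<subseteq> L}"

definition dual_code :: "('a::field^'n^'m) set \<Rightarrow> ('a^'n^'m) set" where
  "dual_code C = {D. \<forall>c\<in>C. trace (c ** transpose D) = 0}"

abbreviation mdim :: "('a::field^'n^'m) set \<Rightarrow> nat" where
  "mdim S \<equiv> vector_space.dim mscale S"

abbreviation msubspace :: "('a::field^'n^'m) set \<Rightarrow> bool" where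
  "msubspace S \<equiv> module.subspace mscale S"

end

theory Submission
  imports Defs
begin

(* Let F c = c B^T and give Omega = F_q^l x C2 the uniform distribution. Since
   (x, D) |-> psi x + D is a bijection Omega -> C1 and F is additive, every non-empty fibre
   {D : C2. F (psi x + D) = y} has |ker F /\ C2| elements and every non-empty fibre of F on C1
   has |ker F /\ C1| elements. So on the support of the joint law the ratio p(x,y) / (p(x) p(y))
   is the constant |F C1| / |F C2|, and the mutual information is its logarithm.
   For the trace form <X, Y> = tr (X Y^T) one has <c B^T, A> = <c, A B>, hence C^perp /\ V_L is
   the image under A |-> A B of the annihilator of F C. Combining |S| |S^perp| = q^(mu m) with the
   kernel of A |-> A B turns |F C1| / |F C2| into |C2^perp /\ V_L| / |C1^perp /\ V_L|. *)

lemma card_fibre_eq_card_kernel: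
  fixes g :: "'a::ab_group_add \<Rightarrow> 'b::ab_group_add"
  assumes add: "\<And>x y. g (x + y) = g x + g y"
    and diff_closed: "\<And>x y. x \<in> P \<Longrightarrow> y \<in> P \<Longrightarrow> x - y \<in> P"
    and "y \<in> g ` P"
  shows "card {x\<in>P. g x = y} = card {x\<in>P. g x = 0}"
proof -
  interpret Modules.additive g by unfold_locales (rule add)
  obtain x0 where x0: "x0 \<in> P" "y = g x0" using assms(3) by blast
  have add_closed: "x0 + k \<in> P" if "k \<in> P" for k
    using diff_closed[OF x0(1) diff_closed[OF diff_closed[OF x0(1) x0(1)] that]] by simp
  have "{x\<in>P. g x = y} = (+) x0 ` {x\<in>P. g x = 0}"
  proof (intro equalityI subsetI)
    fix x assume "x \<in> {x\<in>P. g x = y}"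
    then have "x - x0 \<in> {x\<in>P. g x = 0}" "x = x0 + (x - x0)"
      using x0 diff_closed by (auto simp: diff)
    then show "x \<in> (+) x0 ` {x\<in>P. g x = 0}" by blast
  qed (use x0 add_closed in \<open>auto simp: add\<close>)
  then show ?thesis by (simp add: card_image)
qed

lemma card_image_mult_card_kernel:
  fixes g :: "'a::ab_group_add \<Rightarrow> 'b::ab_group_add"
  assumes "\<And>x y. g (x + y) = g x + g y"
    and "\<And>x y. x \<in> P \<Longrightarrow> y \<in> P \<Longrightarrow> x - y \<in> P"
    and "finite P"
  shows "card (g ` P) * card {x\<in>P. g x = 0} = card P"
proof -
  have "card P = (\<Sum>y\<in>g ` P. card {x\<in>P. g x = y})"
    using sum.image_gen[OF \<open>finite P\<close>, of "\<lambda>_. 1::nat" g] by simp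
  also have "\<dots> = (\<Sum>y\<in>g ` P. card {x\<in>P. g x = 0})"
    using card_fibre_eq_card_kernel[OF assms(1,2)] by simp
  finally show ?thesis by simp
qed

lemma (in vector_space) card_subspace:
  assumes "finite (UNIV :: 'b set)" and "subspace S"
  shows "card S = CARD('a) ^ dim S"
proof -
  obtain \<beta> where \<beta>: "\<beta> \<subseteq> S" "independent \<beta>" "S \<subseteq> span \<beta>" "card \<beta> = dim S"
    by (rule basis_exists)
  have fin: "finite \<beta>" using assms(1) by (rule finite_subset[OF subset_UNIV])
  define comb where "comb = (\<lambda>u. \<Sum>v\<in>\<beta>. u v *s v)"
  define coeffs where "coeffs = PiE \<beta> (\<lambda>_. UNIV :: 'a set)"
  have "comb ` coeffs = span \<beta>"
  proof -
    have "comb u \<in> comb ` coeffs" for u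
    proof (rule image_eqI)
      show "comb u = comb (restrict u \<beta>)" unfolding comb_def by (rule sum.cong) auto
    qed (simp add: coeffs_def)
    then have "comb ` coeffs = range comb" by blast
    then show ?thesis by (simp add: span_finite[OF fin] comb_def)
  qed
  also have "\<dots> = S" using span_subspace[OF \<beta>(1,3) assms(2)] .
  finally have image: "comb ` coeffs = S" .
  have "inj_on comb coeffs"
  proof (rule inj_onI)
    fix u u' assume u: "u \<in> coeffs" and u': "u' \<in> coeffs" and eq: "comb u = comb u'"
    have "(\<Sum>v\<in>\<beta>. (u v - u' v) *s v) = 0"
      using eq by (simp add: comb_def scale_left_diff_distrib sum_subtractf)
    then have "dependent \<beta>" if "\<exists>v\<in>\<beta>. u v - u' v \<noteq> 0"
      unfolding dependent_finite[OF fin] using that by (intro exI[of _ "\<lambda>v. u v - u' v"]) simp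
    then have "\<forall>v\<in>\<beta>. u v - u' v = 0" using \<beta>(2) by blast
    then show "u = u'" using u u' unfolding coeffs_def by (intro PiE_ext) auto
  qed
  then have "card S = card coeffs" using image by (metis card_image)
  also have "\<dots> = CARD('a) ^ dim S" by (simp add: coeffs_def card_PiE fin \<beta>(4))
  finally show ?thesis .
qed

lemma (in vector_space) card_kernel_functional:
  fixes \<phi> :: "'b \<Rightarrow> 'a"
  assumes add: "\<And>x y. \<phi> (x + y) = \<phi> x + \<phi> y" and scale: "\<And>c x. \<phi> (c *s x) = c * \<phi> x"
    and U: "subspace U" and "u \<in> U" "\<phi> u \<noteq> 0"
  shows "card {x\<in>U. \<phi> x = 0} * CARD('a) = card U"
proof -
  define u0 where "u0 = inverse (\<phi> u) *s u"
  have u0: "u0 \<in> U" "\<phi> u0 = 1"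
    using assms by (simp_all add: u0_def subspace_scale scale)
  have diff: "\<phi> (x - y) = \<phi> x - \<phi> y" for x y
    using add[of "x - y" y] by simp
  define K where "K = {x\<in>U. \<phi> x = 0}"
  define m where "m = (\<lambda>(k, t). k + t *s u0)"
  \<comment> \<open>\<open>m\<close> is inverted by \<open>x \<mapsto> (x - \<phi> x *s u0, \<phi> x)\<close>\<close>
  have "inj_on m (K \<times> UNIV)"
  proof (rule inj_onI, clarify)
    fix k t k' t' assume "k \<in> K" "k' \<in> K" and eq: "m (k, t) = m (k', t')"
    have \<phi>_m: "\<phi> (m (k, t)) = t" if "k \<in> K" for k t
      using that by (simp add: m_def K_def add scale u0)
    have "t = t'" using \<phi>_m[of k t] \<phi>_m[of k' t'] \<open>k \<in> K\<close> \<open>k' \<in> K\<close> eq by simp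
    then show "k = k' \<and> t = t'" using eq by (simp add: m_def)
  qed
  moreover have "m ` (K \<times> UNIV) = U"
  proof (intro equalityI subsetI)
    fix x assume "x \<in> U"
    then have "x - \<phi> x *s u0 \<in> K" "x = m (x - \<phi> x *s u0, \<phi> x)"
      using u0 U by (simp_all add: K_def m_def diff scale subspace_diff subspace_scale)
    then show "x \<in> m ` (K \<times> UNIV)" by blast
  qed (use u0 U in \<open>auto simp: m_def K_def intro!: subspace_add subspace_scale\<close>)
  ultimately have "card U = card (K \<times> (UNIV :: 'a set))" by (metis card_image)
  also have "\<dots> = card K * CARD('a)" by (rule card_cartesian_product)
  finally show ?thesis by (simp only: K_def)
qed

lemma (in vector_space) card_mult_card_orthogonal:
  fixes p :: "'b \<Rightarrow> 'b \<Rightarrow> 'a"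
  assumes finite_vectors: "finite (UNIV :: 'b set)" and finite_scalars: "finite (UNIV :: 'a set)"
    and add_left: "\<And>x y z. p (x + y) z = p x z + p y z"
    and scale_left: "\<And>c x z. p (c *s x) z = c * p x z"
    and add_right: "\<And>x y z. p z (x + y) = p z x + p z y"
    and scale_right: "\<And>c x z. p z (c *s x) = c * p z x"
    and nondegenerate: "\<And>s. s \<noteq> 0 \<Longrightarrow> \<exists>T. p s T \<noteq> 0"
    and S: "subspace S"
  shows "card S * card {T. \<forall>s\<in>S. p s T = 0} = CARD('b)"
proof -
  define q V P where "q = CARD('a)" and "V = CARD('b)" and "P = {T. \<forall>s\<in>S. p s T = 0}"
  have finite_sets: "finite (A :: 'b set)" for A using finite_subset[OF subset_UNIV finite_vectors] .
  have "0 \<in> S" using S by (rule subspace_0)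
  \<comment> \<open>Count the zeros of \<open>p\<close> on \<open>S \<times> UNIV\<close> by rows and by columns: a nonzero
    functional vanishes on exactly a \<open>1/q\<close> fraction of a subspace.\<close>
  have zeros_in_row: "q * card {T. p s T = 0} = (if s = 0 then q * V else V)" if "s \<in> S" for s
  proof (cases "s = 0")
    case True
    have "p 0 T = 0" for T using scale_left[of 0 0 T] by simp
    then show ?thesis using True by (simp add: V_def)
  next
    case False
    then obtain T where "p s T \<noteq> 0" using nondegenerate by blast
    then have "card {T\<in>UNIV. p s T = 0} * q = V"
      unfolding q_def V_def
      by (rule card_kernel_functional[OF add_right scale_right subspace_UNIV UNIV_I])
    then show ?thesis using False by (simp add: mult.commute)
  qed
  have zeros_in_column: "q * card {s\<in>S. p s T = 0} = (if T \<in> P then q * card S else card S)" for T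
  proof (cases "T \<in> P")
    case True
    then have "{s\<in>S. p s T = 0} = S" by (auto simp: P_def)
    then show ?thesis using True by simp
  next
    case False
    then obtain s where "s \<in> S" "p s T \<noteq> 0" by (auto simp: P_def)
    then have "card {s\<in>S. p s T = 0} * q = card S"
      unfolding q_def by (rule card_kernel_functional[OF add_left scale_left S])
    then show ?thesis using False by (simp add: mult.commute)
  qed
  have "(\<Sum>s\<in>S. card {T. p s T = 0}) = card (SIGMA s:S. {T. p s T = 0})"
    by (simp add: finite_sets)
  also have "\<dots> = card (SIGMA T:UNIV. {s\<in>S. p s T = 0})"
    by (rule bij_betw_same_card[of prod.swap]) (auto intro!: bij_betwI[of _ _ _ prod.swap])
  also have "\<dots> = (\<Sum>T\<in>UNIV. card {s\<in>S. p s T = 0})"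
    by (simp add: finite_sets)
  finally have "(\<Sum>s\<in>S. card {T. p s T = 0}) = (\<Sum>T\<in>UNIV. card {s\<in>S. p s T = 0})" .
  then have "(\<Sum>s\<in>S. q * card {T. p s T = 0}) = (\<Sum>T\<in>UNIV. q * card {s\<in>S. p s T = 0})"
    by (simp add: sum_distrib_left[symmetric])
  also have "(\<Sum>s\<in>S. q * card {T. p s T = 0}) = q * V + (card S - 1) * V"
    using zeros_in_row finite_sets \<open>0 \<in> S\<close> by (simp add: sum.remove)
  also have "(\<Sum>T\<in>UNIV. q * card {s\<in>S. p s T = 0}) = card P * (q * card S) + (V - card P) * card S"
    using zeros_in_column
    by (simp add: sum.If_cases V_def card_Diff_subset finite_sets Compl_eq_Diff_UNIV)
  finally have double_count: "q * V + (card S - 1) * V = card P * (q * card S) + (V - card P) * card S" .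
  have "1 \<le> card S" using \<open>0 \<in> S\<close> by (auto simp: Suc_le_eq card_gt_0_iff finite_sets)
  moreover have "card P \<le> V" unfolding V_def by (rule card_mono[OF finite_vectors subset_UNIV])
  ultimately have "int q * int V + (int (card S) - 1) * int V
      = int (card P) * (int q * int (card S)) + (int V - int (card P)) * int (card S)"
    using arg_cong[OF double_count, of int] by (simp only: of_nat_add of_nat_mult of_nat_diff of_nat_1)
  then have "(int q - 1) * (int V - int (card S) * int (card P)) = 0"
    by (simp add: algebra_simps)
  moreover have "q \<ge> 2"
    using card_mono[OF finite_scalars, of "{0, 1}"] by (simp add: q_def)
  ultimately show ?thesis by (simp add: V_def P_def flip: of_nat_mult)
qed

interpretation mv: vector_space "mscale :: 'a::field \<Rightarrow> 'a^'n^'m \<Rightarrow> 'a^'n^'m"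
  by (rule mscale_vector_space)

lemma matrix_add_rdistrib: "(A + A') ** M = A ** M + A' ** M"
  for A A' :: "'a::semiring_1^'k^'m" and M :: "'a^'n^'k"
  by (simp add: matrix_matrix_mult_def vec_eq_iff distrib_right sum.distrib)

lemma mscale_matrix_mult: "mscale c A ** M = mscale c (A ** M)"
  for A :: "'a::field^'k^'m" and M :: "'a^'n^'k"
  by (simp add: matrix_matrix_mult_def mscale_def vec_eq_iff sum_distrib_left mult.assoc)

lemma msubspace_image_matrix_mult:
  fixes M :: "'a::field^'n^'k"
  assumes "msubspace (S :: ('a^'k^'m) set)"
  shows "msubspace ((\<lambda>A. A ** M) ` S)"
proof -
  have "Vector_Spaces.linear mscale mscale (\<lambda>A::'a^'k^'m. A ** M)"
    by (simp add: Vector_Spaces.linear_iff mscale_vector_space matrix_add_rdistrib mscale_matrix_mult)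
  then show ?thesis
    using module_hom.subspace_image assms by (fastforce simp: linear_iff_module_hom)
qed

definition frobenius_inner :: "'a::semiring_1^'n^'m \<Rightarrow> 'a^'n^'m \<Rightarrow> 'a" where
  "frobenius_inner X Y = (\<Sum>i\<in>UNIV. \<Sum>j\<in>UNIV. X$i$j * Y$i$j)"

lemma trace_mult_transpose: "trace (X ** transpose Y) = frobenius_inner X Y"
  by (simp add: trace_def matrix_matrix_mult_def transpose_def frobenius_inner_def)

lemma frobenius_inner_mult_transpose:
  "frobenius_inner (X ** transpose M) Y = frobenius_inner X (Y ** M)"
  for X :: "'a::comm_semiring_1^'n^'m" and M :: "'a^'n^'k"
  by (simp flip: trace_mult_transpose add: matrix_transpose_mul matrix_mul_assoc)

lemma frobenius_inner_add_left: "frobenius_inner (X + X') Y = frobenius_inner X Y + frobenius_inner X' Y"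
  by (simp add: frobenius_inner_def distrib_right sum.distrib)

lemma frobenius_inner_add_right: "frobenius_inner X (Y + Y') = frobenius_inner X Y + frobenius_inner X Y'"
  by (simp add: frobenius_inner_def distrib_left sum.distrib)

lemma frobenius_inner_mscale_left: "frobenius_inner (mscale c X) Y = c * frobenius_inner X Y"
  by (simp add: frobenius_inner_def mscale_def sum_distrib_left mult.assoc)

lemma frobenius_inner_mscale_right: "frobenius_inner X (mscale c Y) = c * frobenius_inner X Y"
  for c :: "'a::field"
  by (simp add: frobenius_inner_def mscale_def sum_distrib_left mult_ac)

lemma frobenius_inner_nondegenerate:
  fixes X :: "'a::field^'n^'m"
  assumes "X \<noteq> 0"
  shows "\<exists>Y. frobenius_inner X Y \<noteq> 0"
proof -
  obtain i j where "X$i$j \<noteq> 0" using assms by (auto simp: vec_eq_iff)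
  moreover have "frobenius_inner X (\<chi> i' j'. if i' = i \<and> j' = j then 1 else 0) = X$i$j"
  proof -
    have row_sum: "(\<Sum>j'\<in>UNIV. if i' = i \<and> j' = j then X$i$j else 0) = (if i' = i then X$i$j else 0)"
      for i' by (cases "i' = i") auto
    have "frobenius_inner X (\<chi> i' j'. if i' = i \<and> j' = j then 1 else 0)
        = (\<Sum>i'\<in>UNIV. \<Sum>j'\<in>UNIV. if i' = i \<and> j' = j then X$i$j else 0)"
      unfolding frobenius_inner_def by (intro sum.cong refl) auto
    then show ?thesis by (simp add: row_sum)
  qed
  ultimately show ?thesis by metis
qed

lemma msubspace_frobenius_orthogonal: "msubspace {Y. \<forall>X\<in>S. frobenius_inner X Y = 0}"
  unfolding mv.subspace_def
  by (auto simp: frobenius_inner_add_right frobenius_inner_mscale_right) (simp add: frobenius_inner_def)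

lemma card_mult_card_frobenius_orthogonal:
  fixes S :: "('a::{finite,field}^'n^'m) set"
  assumes "msubspace S"
  shows "card S * card {Y. \<forall>X\<in>S. frobenius_inner X Y = 0} = CARD('a^'n^'m)"
  by (rule mv.card_mult_card_orthogonal)
     (simp_all add: frobenius_inner_add_left frobenius_inner_add_right frobenius_inner_mscale_left
       frobenius_inner_mscale_right frobenius_inner_nondegenerate assms)

lemma row_space_eq_range: "row_space B = range (\<lambda>x. transpose B *v x)"
  for B :: "'a::field^'n^'m"
proof
  show "range (\<lambda>x. transpose B *v x) \<subseteq> row_space B"
    using matrix_vector_mult_in_columnspace_gen[of "transpose B"] by (auto simp: row_space_def)
  have "B $ i = transpose B *v axis i 1" for i
    by (simp add: vec_eq_iff transpose_def matrix_vector_mult_def axis_def if_distrib cong: if_cong)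
  then have "rows B \<subseteq> range (\<lambda>x. transpose B *v x)"
    by (auto simp: rows_def row_def vec_lambda_eta)
  then show "row_space B \<subseteq> range (\<lambda>x. transpose B *v x)"
    unfolding row_space_def by (rule vec.span_minimal) (rule vec.subspace_image[OF vec.subspace_UNIV])
qed

lemma row_matrix_mult: "(A ** B) $ i = transpose B *v (A $ i)"
  for A :: "'a::comm_semiring_1^'k^'m"
  by (simp add: vec_eq_iff matrix_matrix_mult_def matrix_vector_mult_def transpose_def
      mult.commute[of "A $ i $ _"])

lemma V_of_row_space: "V_of (row_space B) = range (\<lambda>A. A ** B)"
  for B :: "'a::field^'n^'k"
proof -
  have in_V_of: "V \<in> V_of (row_space B) \<longleftrightarrow> (\<forall>i. V $ i \<in> row_space B)" for V :: "'a^'n^'m"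
  proof -
    have "rows V \<subseteq> row_space B \<longleftrightarrow> row_space V \<subseteq> row_space B"
      unfolding row_space_def by (meson vec.span_minimal vec.span_superset vec.subspace_span subset_trans)
    then show ?thesis by (auto simp: V_of_def rows_def row_def vec_lambda_eta)
  qed
  have rows_in_row_space: "(\<forall>i. V $ i \<in> row_space B) \<longleftrightarrow> (\<exists>A. V = A ** B)" for V :: "'a^'n^'m"
  proof
    assume "\<forall>i. V $ i \<in> row_space B"
    then have "\<forall>i. \<exists>x. V $ i = transpose B *v x" by (auto simp: row_space_eq_range)
    then obtain a where "\<And>i. V $ i = transpose B *v a i" by metis
    then have "V = (\<chi> i. a i) ** B" by (simp add: vec_eq_iff row_matrix_mult)
    then show "\<exists>A. V = A ** B" ..
  qed (auto simp: row_matrix_mult row_space_eq_range)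
  show ?thesis using in_V_of rows_in_row_space by auto
qed

lemma dual_code_inter_V_of_row_space:
  fixes C :: "('a::field^'n^'m) set" and B :: "'a^'n^'u"
  shows "dual_code C \<inter> V_of (row_space B)
    = (\<lambda>A. A ** B) ` {A. \<forall>Y\<in>(\<lambda>c. c ** transpose B) ` C. frobenius_inner Y A = 0}"
  by (auto simp: dual_code_def V_of_row_space trace_mult_transpose frobenius_inner_mult_transpose)

lemma card_dual_code_inter_V_of_row_space:
  fixes C :: "('a::{finite,field}^'n^'m) set" and B :: "'a^'n^'u"
  assumes "msubspace C"
  shows "card (dual_code C \<inter> V_of (row_space B)) * card {A :: 'a^'u^'m. A ** B = 0}
      * card ((\<lambda>c. c ** transpose B) ` C) = CARD('a^'u^'m)"
proof -
  define P where "P = {A. \<forall>Y\<in>(\<lambda>c. c ** transpose B) ` C. frobenius_inner Y A = 0}"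
  have "msubspace P" unfolding P_def by (rule msubspace_frobenius_orthogonal)
  then have "card ((\<lambda>A. A ** B) ` P) * card {A\<in>P. A ** B = 0} = card P"
    by (intro card_image_mult_card_kernel) (simp_all add: matrix_add_rdistrib mv.subspace_diff)
  moreover have "{A\<in>P. A ** B = 0} = {A. A ** B = 0}"
    by (auto simp: P_def frobenius_inner_mult_transpose) (simp add: frobenius_inner_def)
  moreover have "dual_code C \<inter> V_of (row_space B) = (\<lambda>A. A ** B) ` P"
    unfolding P_def by (rule dual_code_inter_V_of_row_space)
  ultimately have "card (dual_code C \<inter> V_of (row_space B)) * card {A :: 'a^'u^'m. A ** B = 0}
      * card ((\<lambda>c. c ** transpose B) ` C) = card P * card ((\<lambda>c. c ** transpose B) ` C)"
    by simp
  also have "\<dots> = CARD('a^'u^'m)"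
    using card_mult_card_frobenius_orthogonal[OF msubspace_image_matrix_mult[OF assms]]
    by (simp add: P_def mult.commute)
  finally show ?thesis .
qed

lemma msubspace_dual_code_inter_V_of_row_space:
  "msubspace (dual_code C \<inter> V_of (row_space B))"
  unfolding dual_code_inter_V_of_row_space
  by (rule msubspace_image_matrix_mult[OF msubspace_frobenius_orthogonal])

lemma card_image_ratio_eq_card_dual_code_ratio:
  fixes C1 C2 :: "('a::{finite,field}^'n^'m) set" and B :: "'a^'n^'u"
  assumes "msubspace C1" and "msubspace C2"
  shows "card ((\<lambda>c. c ** transpose B) ` C1) / card ((\<lambda>c. c ** transpose B) ` C2)
    = card (dual_code C2 \<inter> V_of (row_space B)) / card (dual_code C1 \<inter> V_of (row_space B))"
proof -
  let ?K = "card {A :: 'a^'u^'m. A ** B = 0}"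
  have "?K \<noteq> 0" by (simp add: card_eq_0_iff) (metis times0_left)
  have "card (dual_code C1 \<inter> V_of (row_space B)) * ?K * card ((\<lambda>c. c ** transpose B) ` C1)
      = card (dual_code C2 \<inter> V_of (row_space B)) * ?K * card ((\<lambda>c. c ** transpose B) ` C2)"
    using card_dual_code_inter_V_of_row_space[OF assms(1), of B]
      card_dual_code_inter_V_of_row_space[OF assms(2), of B]
    by (simp only:)
  then have "?K * (card ((\<lambda>c. c ** transpose B) ` C1) * card (dual_code C1 \<inter> V_of (row_space B)))
      = ?K * (card (dual_code C2 \<inter> V_of (row_space B)) * card ((\<lambda>c. c ** transpose B) ` C2))"
    by (simp only: ac_simps)
  then have "card ((\<lambda>c. c ** transpose B) ` C1) * card (dual_code C1 \<inter> V_of (row_space B))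
      = card (dual_code C2 \<inter> V_of (row_space B)) * card ((\<lambda>c. c ** transpose B) ` C2)"
    using mult_left_cancel[OF \<open>?K \<noteq> 0\<close>] by (simp only:)
  moreover have "card (dual_code C1 \<inter> V_of (row_space B)) \<noteq> 0"
    "card ((\<lambda>c. c ** transpose B) ` C2) \<noteq> 0"
    using mv.subspace_0[OF msubspace_dual_code_inter_V_of_row_space] mv.subspace_0[OF assms(2)]
    by (auto simp: card_eq_0_iff)
  ultimately show ?thesis
    by (simp add: frac_eq_eq flip: of_nat_mult)
qed

lemma distributed_pmf_count_space:
  "distributed (measure_pmf p) (count_space UNIV) X (\<lambda>x. ennreal (pmf (map_pmf X p) x))"
  unfolding distributed_def
  using measure_pmf_eq_density[of "map_pmf X p"] by (simp add: map_pmf_rep_eq)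

lemma mutual_information_pmf:
  fixes p :: "'c pmf" and X :: "'c \<Rightarrow> 'x::finite" and Y :: "'c \<Rightarrow> 'y::finite"
  assumes "1 < b"
  shows "prob_space.mutual_information (measure_pmf p) b (count_space UNIV) (count_space UNIV) X Y
    = (\<Sum>z\<in>UNIV. pmf (map_pmf (\<lambda>\<omega>. (X \<omega>, Y \<omega>)) p) z *
        log b (pmf (map_pmf (\<lambda>\<omega>. (X \<omega>, Y \<omega>)) p) z /
          (pmf (map_pmf X p) (fst z) * pmf (map_pmf Y p) (snd z))))"
proof -
  interpret information_space "measure_pmf p" b
    by unfold_locales (rule assms)
  have pair_count_space: "count_space (UNIV::'x set) \<Otimes>\<^sub>M count_space (UNIV::'y set) = count_space UNIV"
    by (simp add: pair_measure_count_space)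
  have "distributed (measure_pmf p) (count_space UNIV \<Otimes>\<^sub>M count_space UNIV) (\<lambda>\<omega>. (X \<omega>, Y \<omega>))
      (\<lambda>z. ennreal (pmf (map_pmf (\<lambda>\<omega>. (X \<omega>, Y \<omega>)) p) z))"
    unfolding pair_count_space by (rule distributed_pmf_count_space)
  then show ?thesis
    by (subst mutual_information_distr[OF _ _ distributed_pmf_count_space _ distributed_pmf_count_space])
       (auto simp: sigma_finite_measure_count_space_finite pair_count_space lebesgue_integral_count_space_finite)
qed

lemma mutual_information_pmf_constant_ratio:
  fixes p :: "'c pmf" and X :: "'c \<Rightarrow> 'x::finite" and Y :: "'c \<Rightarrow> 'y::finite"
  assumes "1 < b"
    and ratio: "\<And>x y. pmf (map_pmf (\<lambda>\<omega>. (X \<omega>, Y \<omega>)) p) (x, y) \<noteq> 0 \<Longrightarrow>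
      pmf (map_pmf (\<lambda>\<omega>. (X \<omega>, Y \<omega>)) p) (x, y) / (pmf (map_pmf X p) x * pmf (map_pmf Y p) y) = R"
  shows "prob_space.mutual_information (measure_pmf p) b (count_space UNIV) (count_space UNIV) X Y
    = log b R"
proof -
  let ?J = "pmf (map_pmf (\<lambda>\<omega>. (X \<omega>, Y \<omega>)) p)"
  have "prob_space.mutual_information (measure_pmf p) b (count_space UNIV) (count_space UNIV) X Y
      = (\<Sum>z\<in>UNIV. ?J z * log b (?J z / (pmf (map_pmf X p) (fst z) * pmf (map_pmf Y p) (snd z))))"
    by (rule mutual_information_pmf[OF assms(1)])
  also have "\<dots> = (\<Sum>z\<in>UNIV. ?J z * log b R)"
  proof (rule sum.cong[OF refl], clarify)
    fix x y
    show "?J (x, y) * log b (?J (x, y) / (pmf (map_pmf X p) (fst (x, y)) * pmf (map_pmf Y p) (snd (x, y))))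
        = ?J (x, y) * log b R"
      by (cases "?J (x, y) = 0") (simp_all add: ratio)
  qed
  also have "\<dots> = log b R"
    by (simp add: sum_pmf_eq_1 flip: sum_distrib_right)
  finally show ?thesis .
qed

lemma pair_pmf_of_set:
  assumes "finite A" "A \<noteq> {}" "finite B" "B \<noteq> {}"
  shows "pair_pmf (pmf_of_set A) (pmf_of_set B) = pmf_of_set (A \<times> B)"
  by (rule pmf_eqI) (auto simp: pmf_pair assms card_cartesian_product indicator_def)

lemma pmf_map_pmf_of_set:
  assumes "finite A" "A \<noteq> {}"
  shows "pmf (map_pmf f (pmf_of_set A)) y = card {a\<in>A. f a = y} / card A"
  using assms by (simp add: pmf_map measure_pmf_of_set vimage_def Int_def conj_commute)

lemma bij_betw_direct_sum:
  fixes \<psi> :: "'x \<Rightarrow> 'v::ab_group_add"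
  assumes "inj \<psi>" and "range \<psi> = W"
    and C2: "\<And>u v. u \<in> C2 \<Longrightarrow> v \<in> C2 \<Longrightarrow> u - v \<in> C2"
    and W: "\<And>u v. u \<in> W \<Longrightarrow> v \<in> W \<Longrightarrow> u - v \<in> W"
    and "C2 \<inter> W = {0}" and "C1 = {c + w | c w. c \<in> C2 \<and> w \<in> W}"
  shows "bij_betw (\<lambda>(x, D). \<psi> x + D) (UNIV \<times> C2) C1"
proof (rule bij_betw_imageI)
  show "inj_on (\<lambda>(x, D). \<psi> x + D) (UNIV \<times> C2)"
  proof (rule inj_onI, clarify)
    fix x D x' D' assume "D \<in> C2" "D' \<in> C2" and eq: "\<psi> x + D = \<psi> x' + D'"
    then have "\<psi> x - \<psi> x' = D' - D" by (simp add: algebra_simps)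
    then have "\<psi> x - \<psi> x' \<in> C2 \<inter> W"
      using C2[OF \<open>D' \<in> C2\<close> \<open>D \<in> C2\<close>] W[of "\<psi> x" "\<psi> x'"] \<open>range \<psi> = W\<close> by auto
    then have "\<psi> x = \<psi> x'" using \<open>C2 \<inter> W = {0}\<close> by auto
    then show "x = x' \<and> D = D'" using eq \<open>inj \<psi>\<close> by (auto dest: injD)
  qed
  show "(\<lambda>(x, D). \<psi> x + D) ` (UNIV \<times> C2) = C1"
    using assms(2,6) by (auto simp: add.commute)
qed

lemma card_fibres_coset_coding:
  fixes \<psi> :: "'x \<Rightarrow> 'v::ab_group_add" and F :: "'v \<Rightarrow> 'y::ab_group_add"
  assumes F_add: "\<And>u v. F (u + v) = F u + F v"
    and C1: "\<And>u v. u \<in> C1 \<Longrightarrow> v \<in> C1 \<Longrightarrow> u - v \<in> C1"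
    and C2: "\<And>u v. u \<in> C2 \<Longrightarrow> v \<in> C2 \<Longrightarrow> u - v \<in> C2"
    and coset_bij: "bij_betw (\<lambda>(x, D). \<psi> x + D) (UNIV \<times> C2) C1"
    and "D0 \<in> C2"
  shows "card {\<omega>\<in>UNIV \<times> C2. fst \<omega> = x \<and> F (\<psi> (fst \<omega>) + snd \<omega>) = F (\<psi> x + D0)}
      = card {D\<in>C2. F D = 0}"
    and "card {\<omega>\<in>UNIV \<times> C2. F (\<psi> (fst \<omega>) + snd \<omega>) = F (\<psi> x + D0)} = card {c\<in>C1. F c = 0}"
proof -
  have "{\<omega>\<in>UNIV \<times> C2. fst \<omega> = x \<and> F (\<psi> (fst \<omega>) + snd \<omega>) = F (\<psi> x + D0)}
      = Pair x ` {D\<in>C2. F D = F D0}"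
    by (auto simp: F_add)
  moreover have "card {D\<in>C2. F D = F D0} = card {D\<in>C2. F D = 0}"
    using \<open>D0 \<in> C2\<close> by (intro card_fibre_eq_card_kernel[OF F_add C2] imageI)
  ultimately show "card {\<omega>\<in>UNIV \<times> C2. fst \<omega> = x \<and> F (\<psi> (fst \<omega>) + snd \<omega>) = F (\<psi> x + D0)}
      = card {D\<in>C2. F D = 0}"
    by (simp add: card_image inj_on_def)
  let ?h = "\<lambda>\<omega>. \<psi> (fst \<omega>) + snd \<omega>" and ?y = "F (\<psi> x + D0)"
  have h: "bij_betw ?h (UNIV \<times> C2) C1" using coset_bij by (simp add: case_prod_beta')
  have "card {\<omega>\<in>UNIV \<times> C2. F (?h \<omega>) = ?y} = card (?h ` {\<omega>\<in>UNIV \<times> C2. F (?h \<omega>) = ?y})"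
    using inj_on_subset[OF bij_betw_imp_inj_on[OF h], of "{\<omega>\<in>UNIV \<times> C2. F (?h \<omega>) = ?y}"]
    by (simp add: card_image)
  also have "?h ` {\<omega>\<in>UNIV \<times> C2. F (?h \<omega>) = ?y} = {c\<in>C1. F c = ?y}"
    using Compr_image_eq[of ?h "UNIV \<times> C2" "\<lambda>c. F c = ?y"] bij_betw_imp_surj_on[OF h] by simp
  also have "card {c\<in>C1. F c = ?y} = card {c\<in>C1. F c = 0}"
    using bij_betwE[OF coset_bij] \<open>D0 \<in> C2\<close> by (intro card_fibre_eq_card_kernel[OF F_add C1] imageI) auto
  finally show "card {\<omega>\<in>UNIV \<times> C2. F (\<psi> (fst \<omega>) + snd \<omega>) = F (\<psi> x + D0)} = card {c\<in>C1. F c = 0}" .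
qed

lemma mutual_information_coset_coding:
  fixes \<psi> :: "'x::finite \<Rightarrow> 'v::ab_group_add" and F :: "'v \<Rightarrow> 'y::{finite,ab_group_add}"
  assumes "1 < b"
    and F_add: "\<And>u v. F (u + v) = F u + F v"
    and C1: "\<And>u v. u \<in> C1 \<Longrightarrow> v \<in> C1 \<Longrightarrow> u - v \<in> C1"
    and C2: "\<And>u v. u \<in> C2 \<Longrightarrow> v \<in> C2 \<Longrightarrow> u - v \<in> C2" "finite C2" "C2 \<noteq> {}"
    and coset_bij: "bij_betw (\<lambda>(x, D). \<psi> x + D) (UNIV \<times> C2) C1"
  shows "prob_space.mutual_information
      (measure_pmf (pair_pmf (pmf_of_set UNIV) (pmf_of_set C2))) b (count_space UNIV) (count_space UNIV)
      (\<lambda>(x, D). x) (\<lambda>(x, D). F (\<psi> x + D))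
    = log b (card (F ` C1) / card (F ` C2))"
proof -
  define \<Omega> where "\<Omega> = (UNIV :: 'x set) \<times> C2"
  define X where "X = (\<lambda>(x::'x, D::'v). x)"
  define Y where "Y = (\<lambda>(x, D). F (\<psi> x + D))"
  define K1 K2 where "K1 = card {c\<in>C1. F c = 0}" and "K2 = card {D\<in>C2. F D = 0}"
  have \<Omega>: "finite \<Omega>" "\<Omega> \<noteq> {}" "card \<Omega> = card C1"
    using C2 bij_betw_same_card[OF coset_bij] by (auto simp: \<Omega>_def)
  have image_C1: "card (F ` C1) * K1 = card C1"
    unfolding K1_def using F_add C1 bij_betw_finite[OF coset_bij] C2(2)
    by (intro card_image_mult_card_kernel) auto
  have image_C2: "card (F ` C2) * K2 = card C2"
    unfolding K2_def using F_add C2(1,2) by (rule card_image_mult_card_kernel)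
  have "card C1 \<noteq> 0" "card C2 \<noteq> 0" using \<Omega> C2(2,3) by auto
  then have "K1 \<noteq> 0" "K2 \<noteq> 0" "card (F ` C1) \<noteq> 0" "card (F ` C2) \<noteq> 0"
    using image_C1 image_C2 by (metis mult_zero_left mult_zero_right)+
  moreover have "real (card \<Omega>) = card (F ` C1) * K1" "real (card C2) = card (F ` C2) * K2"
    using image_C1 image_C2 \<Omega>(3) by (simp_all flip: of_nat_mult)
  ultimately have counts_ratio:
    "(K2 / card \<Omega>) / ((card C2 / card \<Omega>) * (K1 / card \<Omega>)) = card (F ` C1) / card (F ` C2)"
    by (simp add: field_simps)
  have ratio: "pmf (map_pmf (\<lambda>\<omega>. (X \<omega>, Y \<omega>)) (pmf_of_set \<Omega>)) (x, y)
      / (pmf (map_pmf X (pmf_of_set \<Omega>)) x * pmf (map_pmf Y (pmf_of_set \<Omega>)) y)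
      = card (F ` C1) / card (F ` C2)"
    if joint_positive: "pmf (map_pmf (\<lambda>\<omega>. (X \<omega>, Y \<omega>)) (pmf_of_set \<Omega>)) (x, y) \<noteq> 0" for x y
  proof -
    have "{\<omega>\<in>\<Omega>. X \<omega> = x \<and> Y \<omega> = y} \<noteq> {}"
      using joint_positive by (auto simp: pmf_map_pmf_of_set[OF \<Omega>(1,2)] simp del: Collect_empty_eq)
    then obtain D0 where "D0 \<in> C2" "y = F (\<psi> x + D0)"
      by (auto simp: \<Omega>_def X_def Y_def)
    then have "card {\<omega>\<in>\<Omega>. X \<omega> = x \<and> Y \<omega> = y} = K2" "card {\<omega>\<in>\<Omega>. Y \<omega> = y} = K1"
      using card_fibres_coset_coding[OF F_add C1 C2(1) coset_bij, of D0 x]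
      by (simp_all add: \<Omega>_def X_def Y_def K1_def K2_def case_prod_beta')
    moreover have "{\<omega>\<in>\<Omega>. X \<omega> = x} = Pair x ` C2" by (auto simp: \<Omega>_def X_def)
    then have "card {\<omega>\<in>\<Omega>. X \<omega> = x} = card C2" by (simp add: card_image inj_on_def)
    ultimately have "pmf (map_pmf (\<lambda>\<omega>. (X \<omega>, Y \<omega>)) (pmf_of_set \<Omega>)) (x, y)
        / (pmf (map_pmf X (pmf_of_set \<Omega>)) x * pmf (map_pmf Y (pmf_of_set \<Omega>)) y)
        = (K2 / card \<Omega>) / ((card C2 / card \<Omega>) * (K1 / card \<Omega>))"
      by (simp add: pmf_map_pmf_of_set[OF \<Omega>(1,2)])
    then show ?thesis unfolding counts_ratio .
  qed
  have "pair_pmf (pmf_of_set UNIV) (pmf_of_set C2) = pmf_of_set \<Omega>"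
    unfolding \<Omega>_def using C2 by (intro pair_pmf_of_set) auto
  then show ?thesis
    using mutual_information_pmf_constant_ratio[OF assms(1) ratio] by (simp add: X_def Y_def)
qed

theorem proposition4:
  fixes C1 C2 W :: "('a::{finite,field}^'n^'m) set"
    and \<psi> :: "'a^'l \<Rightarrow> 'a^'n^'m"
    and B :: "'a^'n^'u"
  assumes C1: "msubspace C1" and C2: "msubspace C2" and strict: "C2 \<subset> C1"
    and W: "msubspace W" and W_sub: "W \<subseteq> C1" and W_inter: "C2 \<inter> W = {0}"
    and sum: "C1 = {c + w | c w. c \<in> C2 \<and> w \<in> W}"
    and l_card: "CARD('l) = mdim C1 - mdim C2"
    and psi_lin: "Vector_Spaces.linear (*s) mscale \<psi>"
    and psi_inj: "inj \<psi>" and psi_im: "range \<psi> = W"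
  shows "prob_space.mutual_information
           (measure_pmf (pair_pmf (pmf_of_set (UNIV :: ('a^'l) set)) (pmf_of_set C2)))
           (real CARD('a)) (count_space UNIV) (count_space UNIV)
           (\<lambda>(x, D). x) (\<lambda>(x, D). (\<psi> x + D) ** transpose B)
         = real (mdim (dual_code C2 \<inter> V_of (row_space B)))
           - real (mdim (dual_code C1 \<inter> V_of (row_space B)))"
proof -
  let ?F = "\<lambda>c::'a^'n^'m. c ** transpose B"
  let ?X = "\<lambda>C. dual_code C \<inter> V_of (row_space B)"
  have q: "1 < real CARD('a)"
    using card_mono[of UNIV "{0::'a, 1}"] by simp
  have coset_bij: "bij_betw (\<lambda>(x, D). \<psi> x + D) (UNIV \<times> C2) C1"
    by (rule bij_betw_direct_sum[OF psi_inj psi_im mv.subspace_diff[OF C2] mv.subspace_diff[OF W]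
          W_inter sum])
  have "prob_space.mutual_information
           (measure_pmf (pair_pmf (pmf_of_set (UNIV :: ('a^'l) set)) (pmf_of_set C2)))
           (real CARD('a)) (count_space UNIV) (count_space UNIV)
           (\<lambda>(x, D). x) (\<lambda>(x, D). (\<psi> x + D) ** transpose B)
      = log (real CARD('a)) (card (?F ` C1) / card (?F ` C2))"
    using mv.subspace_0[OF C2]
    by (intro mutual_information_coset_coding[where F = ?F, OF q matrix_add_rdistrib
          mv.subspace_diff[OF C1] mv.subspace_diff[OF C2] _ _ coset_bij]) auto
  also have "card (?F ` C1) / card (?F ` C2) = card (?X C2) / card (?X C1)"
    by (rule card_image_ratio_eq_card_dual_code_ratio[OF C1 C2])
  also have "\<dots> = real CARD('a) ^ mdim (?X C2) / real CARD('a) ^ mdim (?X C1)"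
    by (simp add: mv.card_subspace msubspace_dual_code_inter_V_of_row_space)
  finally show ?thesis
    using q by (simp add: log_divide log_nat_power)
qed

end
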